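(* Let $\mathcal{A}$ be a Boolean relational structure with finite signature such that $c_0\in\langle\mathcal{A}\rangle$. If an $n$-ary Boolean relation $R\neq\emptyset$ is not 0-valid, then $c_1\in\langle\mathcal{A}\cup\{R\}\rangle_{\leq 1}$.
   Context: Domain $\{0,1\}$; $c_0=\{(0)\}$, $c_1=\{(1)\}$. A Boolean relation is 0-valid if it is invariant under the constant operation $0$ (i.e. for nonempty relations, it contains the all-$0$ tuple). $\langle\mathcal{A}\rangle$ is the set of relations pp-definable over $\mathcal{A}$ (formulas $\exists\bar y\,\bigwedge_i R_i(\mathbf{x}_i)$ with $R_i$ in $\mathcal{A}$ or equality). $\langle\mathcal{A}\cup\{R\}\rangle_{\leq 1}$ is the set of relations pp-definable over $\mathcal{A}\cup\{R\}$ using at most one atom with relation $R$. *)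

theory Defs
  imports Main
begin

text \<open>Boolean relations: sets of bool lists (False = 0, True = 1).
  A relation R has arity n if all its tuples have length n.\<close>

definition bool_rel :: "nat \<Rightarrow> bool list set \<Rightarrow> bool" where
  "bool_rel n R \<longleftrightarrow> (\<forall>t\<in>R. length t = n)"

definition c0 :: "bool list set" where "c0 = {[False]}"
definition c1 :: "bool list set" where "c1 = {[True]}"

text \<open>0-valid: invariant under the constant-0 operation.\<close>
definition zero_valid :: "nat \<Rightarrow> bool list set \<Rightarrow> bool" where
  "zero_valid n R \<longleftrightarrow> (R = {} \<or> replicate n False \<in> R)"

datatype atom = RelAt "bool list set" "nat list" | EqAt nat nat

fun holds :: "(nat \<Rightarrow> bool) \<Rightarrow> atom \<Rightarrow> bool" where
  "holds v (RelAt R xs) = (map v xs \<in> R)"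
| "holds v (EqAt i j) = (v i = v j)"

fun atom_over :: "bool list set set \<Rightarrow> atom \<Rightarrow> bool" where
  "atom_over A (RelAt R xs) = (R \<in> A)"
| "atom_over A (EqAt i j) = True"

fun uses_rel :: "bool list set \<Rightarrow> atom \<Rightarrow> bool" where
  "uses_rel R (RelAt S xs) = (S = R)"
| "uses_rel R (EqAt i j) = False"

text \<open>Relation defined by the pp-formula \<open>\<exists>y. \<And>phi\<close> with free variables
  0,...,k-1 (in this order); all other variables occurring in phi are existentially
  quantified.\<close>
definition pp_rel :: "nat \<Rightarrow> atom list \<Rightarrow> bool list set" where
  "pp_rel k phi = {map v [0..<k] | v. \<forall>a\<in>set phi. holds v a}"

definition pp_clone :: "bool list set set \<Rightarrow> bool list set set" where
  "pp_clone A = {S. \<exists>k phi. (\<forall>a\<in>set phi. atom_over A a) \<and> S = pp_rel k phi}"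

definition pp_clone_le1 :: "bool list set set \<Rightarrow> bool list set \<Rightarrow> bool list set set" where
  "pp_clone_le1 A R = {S. \<exists>k phi. (\<forall>a\<in>set phi. atom_over (insert R A) a)
      \<and> length (filter (uses_rel R) phi) \<le> 1 \<and> S = pp_rel k phi}"

end

theory Submission
  imports Defs
begin

text \<open>A valuation v of the variables 0 and 1 is read as the unary map f = v \<circ> var_of_bool,
  so that f True and f False are the values of 0 and 1. The diagram of A - {R}, the
  conjunction of the atoms S(t) over all tuples t of all S \<in> A - {R}, holds under v exactly
  when f preserves A - {R}; adding the single atom R(t) and projecting onto variable 0
  therefore defines {[f True] | f preserves A - {R} and f t \<in> R}. This is c1 unless the
  constant-0 map or negation qualifies. The constant map does not, as R is not 0-valid.
  Negation does not preserve c0 \<in> \<langle>A\<rangle>, hence not A, since unary polymorphisms of A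
  preserve all of \<langle>A\<rangle>; so either it fails on A - {R}, or some t \<in> R has its complement
  outside R, and that t is the one put into the R-atom.\<close>

definition unary_polymorphism :: "(bool \<Rightarrow> bool) \<Rightarrow> bool list set set \<Rightarrow> bool" where
  "unary_polymorphism f B \<longleftrightarrow> (\<forall>S\<in>B. \<forall>t\<in>S. map f t \<in> S)"

lemma holds_comp_unary_polymorphism:
  assumes "atom_over A a" and "unary_polymorphism f A" and "holds v a"
  shows "holds (f \<circ> v) a"
proof (cases a)
  case (RelAt S xs)
  with assms have "S \<in> A" and "map v xs \<in> S" by simp_all
  with assms(2) have "map f (map v xs) \<in> S"
    unfolding unary_polymorphism_def by blast
  with RelAt show ?thesis by simp
next
  case (EqAt i j)
  with assms show ?thesis by simp
qed

lemma pp_clone_unary_polymorphism: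
  assumes "unary_polymorphism f A"
  shows "unary_polymorphism f (pp_clone A)"
  unfolding unary_polymorphism_def
proof (intro ballI)
  fix S x
  assume "S \<in> pp_clone A" and "x \<in> S"
  then obtain k phi where over: "\<forall>a\<in>set phi. atom_over A a" and S: "S = pp_rel k phi"
    unfolding pp_clone_def by blast
  with \<open>x \<in> S\<close> obtain v where x: "x = map v [0..<k]" and sat: "\<forall>a\<in>set phi. holds v a"
    unfolding pp_rel_def by blast
  have "\<forall>a\<in>set phi. holds (f \<circ> v) a"
  proof
    fix a
    assume "a \<in> set phi"
    with over sat show "holds (f \<circ> v) a"
      by (intro holds_comp_unary_polymorphism[OF _ assms]) simp_all
  qed
  then show "map f x \<in> S"
    unfolding S x pp_rel_def map_map by blast
qed

lemma pp_clone_c0_not_complement_closed: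
  assumes "c0 \<in> pp_clone A"
  shows "\<not> unary_polymorphism Not A"
proof
  assume "unary_polymorphism Not A"
  then have "unary_polymorphism Not (pp_clone A)"
    by (rule pp_clone_unary_polymorphism)
  with assms have "map Not [False] \<in> c0"
    unfolding unary_polymorphism_def c0_def by blast
  then show False by (simp add: c0_def)
qed

definition var_of_bool :: "bool \<Rightarrow> nat" where
  "var_of_bool b = (if b then 0 else 1)"

definition diagram :: "bool list set set \<Rightarrow> atom set" where
  "diagram B = (\<lambda>(S, t). RelAt S (map var_of_bool t)) ` (SIGMA S:B. S)"

lemma holds_diagram_iff:
  "(\<forall>a\<in>diagram B. holds v a) \<longleftrightarrow> unary_polymorphism (v \<circ> var_of_bool) B"
  by (auto simp: diagram_def unary_polymorphism_def)

lemma finite_diagram: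
  assumes "finite B" and "\<forall>S\<in>B. finite S"
  shows "finite (diagram B)"
  unfolding diagram_def using assms by (intro finite_imageI finite_SigmaI) auto

lemma atom_over_diagram: "a \<in> diagram B \<Longrightarrow> atom_over B a"
  by (auto simp: diagram_def)

lemma atom_over_mono: "atom_over B a \<Longrightarrow> B \<subseteq> C \<Longrightarrow> atom_over C a"
  by (cases a) auto

lemma not_uses_rel_diagram: "R \<notin> B \<Longrightarrow> a \<in> diagram B \<Longrightarrow> \<not> uses_rel R a"
  by (auto simp: diagram_def)

lemma pp_rel_diagram:
  assumes "set atoms = diagram B"
  shows "pp_rel 1 (RelAt R (map var_of_bool t) # atoms)
    = {[f True] | f. unary_polymorphism f B \<and> map f t \<in> R}"
    (is "?lhs = ?rhs")
proof
  show "?lhs \<subseteq> ?rhs"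
  proof
    fix x
    assume "x \<in> ?lhs"
    then obtain v where x: "x = map v [0..<1]"
      and sat: "\<forall>a\<in>set (RelAt R (map var_of_bool t) # atoms). holds v a"
      unfolding pp_rel_def by blast
    then have "unary_polymorphism (v \<circ> var_of_bool) B" "map (v \<circ> var_of_bool) t \<in> R"
      using assms holds_diagram_iff by auto
    moreover have "x = [(v \<circ> var_of_bool) True]"
      using x by (simp add: var_of_bool_def)
    ultimately show "x \<in> ?rhs" by blast
  qed
next
  show "?rhs \<subseteq> ?lhs"
  proof
    fix x
    assume "x \<in> ?rhs"
    then obtain f where x: "x = [f True]"
      and f: "unary_polymorphism f B" "map f t \<in> R" by blast
    define v where "v i = f (i = 0)" for i :: nat
    have v_f: "v \<circ> var_of_bool = f"
      by (simp add: fun_eq_iff v_def var_of_bool_def)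
    have "\<forall>a\<in>set (RelAt R (map var_of_bool t) # atoms). holds v a"
      using assms f holds_diagram_iff[of B v] by (simp add: v_f)
    moreover have "x = map v [0..<1]"
      using x by (simp add: v_def)
    ultimately show "x \<in> ?lhs"
      unfolding pp_rel_def by blast
  qed
qed

lemma bool_rel_finite:
  assumes "bool_rel m S"
  shows "finite S"
proof (rule finite_subset)
  show "S \<subseteq> {xs. length xs = m}" using assms by (auto simp: bool_rel_def)
  show "finite {xs :: bool list. length xs = m}"
    using finite_lists_length_eq[of "UNIV :: bool set" m] by simp
qed

lemma bool_fun_cases_False_at_True:
  assumes "\<not> f True"
  shows "f = (\<lambda>_. False) \<or> f = Not"
  using assms by (cases "f False") (simp_all add: fun_eq_iff all_bool_eq)

lemma complement_witness:
  assumes "c0 \<in> pp_clone A" and "R \<noteq> {}"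
  obtains t where "t \<in> R" and "\<not> (unary_polymorphism Not (A - {R}) \<and> map Not t \<in> R)"
proof -
  have "\<not> unary_polymorphism Not (insert R A)"
    using pp_clone_c0_not_complement_closed[OF assms(1)]
    by (auto simp: unary_polymorphism_def)
  with assms(2) that show thesis
    by (auto simp: unary_polymorphism_def)
qed

lemma unary_polymorphism_fixes_True:
  assumes "bool_rel n R" and "\<not> zero_valid n R" and "t \<in> R"
    and "\<not> (unary_polymorphism Not B \<and> map Not t \<in> R)"
    and "unary_polymorphism f B" and "map f t \<in> R"
  shows "f True"
proof (rule ccontr)
  assume "\<not> f True"
  then consider "f = (\<lambda>_. False)" | "f = Not"
    using bool_fun_cases_False_at_True by blast
  then show False
  proof cases
    case 1
    with assms(1,3,6) have "replicate n False \<in> R"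
      by (simp add: bool_rel_def map_replicate_const)
    with assms(2) show False by (simp add: zero_valid_def)
  next
    case 2
    with assms(4-6) show False by simp
  qed
qed

lemma pp_rel_diagram_eq_c1:
  assumes "set atoms = diagram B" and "t \<in> R"
    and "\<And>f. unary_polymorphism f B \<Longrightarrow> map f t \<in> R \<Longrightarrow> f True"
  shows "pp_rel 1 (RelAt R (map var_of_bool t) # atoms) = c1"
  unfolding pp_rel_diagram[OF assms(1)]
proof (intro equalityI subsetI)
  fix x
  assume "x \<in> {[f True] | f. unary_polymorphism f B \<and> map f t \<in> R}"
  with assms(3) show "x \<in> c1" by (auto simp: c1_def)
next
  fix x
  assume "x \<in> c1"
  then have "x = [id True]" by (simp add: c1_def)
  then show "x \<in> {[f True] | f. unary_polymorphism f B \<and> map f t \<in> R}"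
    by (intro CollectI exI[of _ id]) (simp add: assms(2) unary_polymorphism_def)
qed

lemma pp_rel_diagram_in_pp_clone_le1:
  assumes "set atoms = diagram (A - {R})"
  shows "pp_rel k (RelAt R xs # atoms) \<in> pp_clone_le1 A R"
  unfolding pp_clone_le1_def
proof (intro CollectI exI[of _ k] exI[of _ "RelAt R xs # atoms"] conjI refl)
  show "\<forall>a\<in>set (RelAt R xs # atoms). atom_over (insert R A) a"
  proof
    fix a
    assume "a \<in> set (RelAt R xs # atoms)"
    then consider "a = RelAt R xs" | "a \<in> diagram (A - {R})"
      using assms by auto
    then show "atom_over (insert R A) a"
      by cases (auto intro: atom_over_mono[OF atom_over_diagram])
  qed
  have "filter (uses_rel R) atoms = []"
    using assms not_uses_rel_diagram[of R "A - {R}"] by (auto simp: filter_empty_conv)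
  then show "length (filter (uses_rel R) (RelAt R xs # atoms)) \<le> 1" by simp
qed

theorem lemma12:
  fixes A :: "bool list set set" and R :: "bool list set" and n :: nat
  assumes "finite A"
    and "\<forall>S\<in>A. \<exists>m. bool_rel m S"
    and "c0 \<in> pp_clone A"
    and "bool_rel n R"
    and "R \<noteq> {}"
    and "\<not> zero_valid n R"
  shows "c1 \<in> pp_clone_le1 A R"
proof -
  obtain t where t: "t \<in> R" and t_Not: "\<not> (unary_polymorphism Not (A - {R}) \<and> map Not t \<in> R)"
    using complement_witness[OF assms(3,5)] .
  have "finite (diagram (A - {R}))"
    using assms(1,2) bool_rel_finite by (intro finite_diagram) auto
  then obtain atoms where atoms: "set atoms = diagram (A - {R})"
    using finite_list by blast
  have "pp_rel 1 (RelAt R (map var_of_bool t) # atoms) = c1"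
    using atoms t unary_polymorphism_fixes_True[OF assms(4,6) t t_Not]
    by (rule pp_rel_diagram_eq_c1)
  with pp_rel_diagram_in_pp_clone_le1[OF atoms] show ?thesis
    by metis
qed

end
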